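(* There is a number $c>0$ such that every trajectory of $$\dot R = R\hat\Omega - k_0R(R^TR-I)-k_2(\pi(R,\Omega)-\pi_0)\Omega^T\mathbb I,$$ $$\dot\Omega = \mathbb I^{-1}((\mathbb I\Omega)\times\Omega) - k_1(E(\Omega)-E_0)\mathbb I\Omega - k_2\mathbb I R^T(\pi(R,\Omega)-\pi_0)$$ starting in $V^{-1}([0,c])$ stays in $V^{-1}([0,c])$ for all $t\ge0$ and converges as $t\to\infty$ to $$V^{-1}(0)=\{(R,\Omega)\in\mathbb R^{3\times3}\times\mathbb R^3: R\in SO(3),\ E(\Omega)=E_0,\ \pi(R,\Omega)=\pi_0\}.$$ Furthermore, $V^{-1}(0)$ is invariant under both this system and the free rigid body system $\dot R=R\hat\Omega$, $\dot\Omega=\mathbb I^{-1}((\mathbb I\Omega)\times\Omega)$ (considered on $\mathbb R^{3\times3}\times\mathbb R^3$).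
   Context: $\mathbb I$ is a symmetric positive definite $3\times3$ matrix. For $\Omega=(\Omega_1,\Omega_2,\Omega_3)$, $\hat\Omega=\begin{bmatrix}0&-\Omega_3&\Omega_2\\ \Omega_3&0&-\Omega_1\\ -\Omega_2&\Omega_1&0\end{bmatrix}$. $\|A\|=\sqrt{\operatorname{trace}(A^TA)}$. $E(\Omega)=\tfrac12\Omega^T\mathbb I\Omega$, $\pi(R,\Omega)=R\mathbb I\Omega$. Fix $R_0\in SO(3)$, $\Omega_0\in\mathbb R^3\setminus\{0\}$, $E_0=E(\Omega_0)$, $\pi_0=\pi(R_0,\Omega_0)$, constants $k_0,k_1,k_2>0$, $U=\{(R,\Omega):\det R>0\}$, and $V(R,\Omega)=\tfrac{k_0}{4}\|R^TR-I\|^2+\tfrac{k_1}{2}|E(\Omega)-E_0|^2+\tfrac{k_2}{2}|\pi(R,\Omega)-\pi_0|^2$ on $U$. *)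

theory Defs
  imports "HOL-Analysis.Analysis" "HOL-Analysis.Cross3"
begin

type_synonym mat3 = "real^3^3"
type_synonym vec3 = "real^3"

definition hat :: "vec3 \<Rightarrow> mat3" where
  "hat W = vector [vector [0, - W$3, W$2],
                   vector [W$3, 0, - W$1],
                   vector [- W$2, W$1, 0]]"

definition frob :: "mat3 \<Rightarrow> real" where
  "frob A = sqrt (trace (transpose A ** A))"

definition outer :: "vec3 \<Rightarrow> vec3 \<Rightarrow> mat3" where
  "outer a b = (\<chi> i j. a$i * b$j)"

definition sym_pos_def_mat :: "mat3 \<Rightarrow> bool" where
  "sym_pos_def_mat J \<longleftrightarrow> transpose J = J \<and> (\<forall>v. v \<noteq> 0 \<longrightarrow> v \<bullet> (J *v v) > 0)"

definition energy :: "mat3 \<Rightarrow> vec3 \<Rightarrow> real" where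
  "energy J W = (1/2) * (W \<bullet> (J *v W))"

definition angmom :: "mat3 \<Rightarrow> mat3 \<Rightarrow> vec3 \<Rightarrow> vec3" where
  "angmom J R W = R *v (J *v W)"

definition dom_U :: "(mat3 \<times> vec3) set" where
  "dom_U = {(R, W). det R > 0}"

definition lyapV :: "mat3 \<Rightarrow> real \<Rightarrow> real \<Rightarrow> real \<Rightarrow> mat3 \<Rightarrow> vec3 \<Rightarrow> mat3 \<Rightarrow> vec3 \<Rightarrow> real" where
  "lyapV J k0 k1 k2 R0 W0 R W =
     k0 / 4 * (frob (transpose R ** R - mat 1))\<^sup>2
   + k1 / 2 * \<bar>energy J W - energy J W0\<bar>\<^sup>2
   + k2 / 2 * (norm (angmom J R W - angmom J R0 W0))\<^sup>2"

definition ctrl_R :: "mat3 \<Rightarrow> real \<Rightarrow> real \<Rightarrow> real \<Rightarrow> mat3 \<Rightarrow> vec3 \<Rightarrow> mat3 \<Rightarrow> vec3 \<Rightarrow> mat3" where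
  "ctrl_R J k0 k1 k2 R0 W0 R W =
     R ** hat W - k0 *\<^sub>R (R ** (transpose R ** R - mat 1))
     - k2 *\<^sub>R outer (angmom J R W - angmom J R0 W0) (W v* J)"

definition ctrl_W :: "mat3 \<Rightarrow> real \<Rightarrow> real \<Rightarrow> real \<Rightarrow> mat3 \<Rightarrow> vec3 \<Rightarrow> mat3 \<Rightarrow> vec3 \<Rightarrow> vec3" where
  "ctrl_W J k0 k1 k2 R0 W0 R W =
     matrix_inv J *v (cross3 (J *v W) W)
     - (k1 * (energy J W - energy J W0)) *\<^sub>R (J *v W)
     - k2 *\<^sub>R (J *v (transpose R *v (angmom J R W - angmom J R0 W0)))"

definition ctrl_solution :: "mat3 \<Rightarrow> real \<Rightarrow> real \<Rightarrow> real \<Rightarrow> mat3 \<Rightarrow> vec3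
    \<Rightarrow> (real \<Rightarrow> mat3) \<Rightarrow> (real \<Rightarrow> vec3) \<Rightarrow> bool" where
  "ctrl_solution J k0 k1 k2 R0 W0 Rt Wt \<longleftrightarrow>
     (\<forall>t\<ge>0. (Rt has_vector_derivative ctrl_R J k0 k1 k2 R0 W0 (Rt t) (Wt t)) (at t within {0..})
          \<and> (Wt has_vector_derivative ctrl_W J k0 k1 k2 R0 W0 (Rt t) (Wt t)) (at t within {0..}))"

definition free_solution :: "mat3 \<Rightarrow> (real \<Rightarrow> mat3) \<Rightarrow> (real \<Rightarrow> vec3) \<Rightarrow> bool" where
  "free_solution J Rt Wt \<longleftrightarrow>
     (\<forall>t\<ge>0. (Rt has_vector_derivative (Rt t ** hat (Wt t))) (at t within {0..})
          \<and> (Wt has_vector_derivative (matrix_inv J *v (cross3 (J *v Wt t) (Wt t)))) (at t within {0..}))"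

definition target_set :: "mat3 \<Rightarrow> mat3 \<Rightarrow> vec3 \<Rightarrow> (mat3 \<times> vec3) set" where
  "target_set J R0 W0 = {(R, W). rotation_matrix R \<and> energy J W = energy J W0
                                 \<and> angmom J R W = angmom J R0 W0}"

end

(*
  V is a Lyapunov function for the controlled system. The free rigid body preserves R^T R, the
  energy and the spatial angular momentum, so its vector field is orthogonal to the gradient of V,
  while the control terms are exactly minus that gradient; hence dV/dt = -|grad V|^2 along
  controlled trajectories and dV/dt = 0 along free ones.

  For small c, R^T R stays within 1/2 of I on the sublevel set V <= c (so det R cannot change sign
  along a trajectory), the sublevel set is compact, and the only critical points of V in it are its
  zeros: at a critical point with energy error e <> 0, Omega is an eigenvector of the inertia
  tensor and of R^T R, and |pi0|^2 is an explicit function of e which, for each of the finitely many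
  eigenvalues, is within O(e) of but never equal to its value at e = 0. A LaSalle-type argument on
  the compact sublevel set then gives V -> 0, hence convergence to V^-1(0).
*)

theory Submission
  imports Defs
begin

section \<open>Matrix algebra\<close>

lemma inner_matrix_mult_left: "inner (A::real^3^3) ((B::real^3^3) ** C) = inner (transpose B ** A) C"
  by (simp add: inner_vec_def matrix_matrix_mult_def transpose_def sum_3 algebra_simps)

lemma inner_transpose_transpose: "inner (transpose (A::real^3^3)) (transpose B) = inner A B"
  by (simp add: inner_vec_def transpose_def sum_3 algebra_simps)

lemma inner_matrix_vector_mult: "inner (a::real^'m) ((M::real^'n^'m) *v b) = inner (transpose M *v a) b"
  by (simp add: dot_lmul_matrix)

lemma matrix_add_rdistrib: "((A::real^'n^'m) + B) ** C = A ** C + B ** C"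
  by (simp add: vec_eq_iff matrix_matrix_mult_def sum.distrib algebra_simps)

lemma transpose_add: "transpose ((A::real^'n^'m) + B) = transpose A + transpose B"
  by (simp add: vec_eq_iff transpose_def)

lemma matrix_mult_scaleR_left: "(c *\<^sub>R (A::real^'n^'m)) ** B = c *\<^sub>R (A ** B)"
  by (simp add: scalar_matrix_assoc)

lemma matrix_mult_scaleR_right: "(A::real^'n^'m) ** (c *\<^sub>R B) = c *\<^sub>R (A ** B)"
  by (simp add: matrix_scalar_ac scalar_matrix_assoc)

lemma scaleR_matrix_vector_mult: "(c *\<^sub>R (A::real^'n^'m)) *v x = c *\<^sub>R (A *v x)"
  by (simp add: scaleR_matrix_vector_assoc)

lemma matrix_vector_mult_uminus: "(A::real^'n^'m) *v (- x) = - (A *v x)"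
  by (simp add: vec_eq_iff matrix_vector_mult_def sum_negf)

lemma inner_symmetric_matrix:
  "transpose J = J \<Longrightarrow> inner (a::real^'n) (J *v b) = inner (J *v a) b"
  using inner_matrix_vector_mult[of a J b] by (simp del: transpose_matrix_vector)

lemma norm_matrix_vector_le: "norm ((A::real^'n^'m) *v v) \<le> norm A * norm v"
proof -
  have "(norm (A *v v))\<^sup>2 = (\<Sum>i\<in>UNIV. (inner (A$i) v)\<^sup>2)"
    unfolding power2_norm_eq_inner by (simp add: inner_vec_def matrix_vector_mult_def power2_eq_square)
  also have "\<dots> \<le> (\<Sum>i\<in>UNIV. (norm (A$i))\<^sup>2 * (norm v)\<^sup>2)"
  proof (rule sum_mono)
    fix i
    have "\<bar>inner (A$i) v\<bar>\<^sup>2 \<le> (norm (A$i) * norm v)\<^sup>2"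
      by (rule power_mono[OF Cauchy_Schwarz_ineq2]) simp
    then show "(inner (A$i) v)\<^sup>2 \<le> (norm (A$i))\<^sup>2 * (norm v)\<^sup>2"
      by (simp add: power_mult_distrib)
  qed
  also have "\<dots> = (norm A * norm v)\<^sup>2"
    by (simp add: power_mult_distrib sum_distrib_right[symmetric] power2_norm_eq_inner inner_vec_def)
  finally show ?thesis
    by (rule power2_le_imp_le) simp
qed

lemma bounded_bilinear_matrix_matrix_mult: "bounded_bilinear (\<lambda>A B::real^'n^'n. A ** B)"
proof -
  have "bilinear (\<lambda>A B::real^'n^'n. A ** B)"
    unfolding bilinear_def linear_iff
    by (auto simp: vec_eq_iff matrix_matrix_mult_def sum.distrib sum_distrib_left algebra_simps)
  then show ?thesis using bilinear_conv_bounded_bilinear by blast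
qed

lemma bounded_bilinear_matrix_vector_mult: "bounded_bilinear (\<lambda>(A::real^'n^'n) b. A *v b)"
proof -
  have "bilinear (\<lambda>(A::real^'n^'n) b. A *v b)"
    unfolding bilinear_def linear_iff
    by (auto simp: vec_eq_iff matrix_vector_mult_def sum.distrib sum_distrib_left algebra_simps)
  then show ?thesis using bilinear_conv_bounded_bilinear by blast
qed

lemma bounded_linear_transpose: "bounded_linear (transpose :: real^'n^'n \<Rightarrow> _)"
proof -
  have "linear (transpose :: real^'n^'n \<Rightarrow> _)"
    unfolding linear_iff by (auto simp: vec_eq_iff transpose_def)
  then show ?thesis using linear_conv_bounded_linear by blast
qed

lemma continuous_matrix_mult [continuous_intros]:
  "continuous F f \<Longrightarrow> continuous F g \<Longrightarrow> continuous F (\<lambda>x. f x ** (g x :: real^'n^'n))"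
  using bounded_bilinear.continuous[OF bounded_bilinear_matrix_matrix_mult] .

lemma continuous_matrix_vector_mult [continuous_intros]:
  "continuous F f \<Longrightarrow> continuous F g \<Longrightarrow> continuous F (\<lambda>x. (f x :: real^'n^'n) *v g x)"
  using bounded_bilinear.continuous[OF bounded_bilinear_matrix_vector_mult] .

lemma continuous_transpose [continuous_intros]:
  "continuous F f \<Longrightarrow> continuous F (\<lambda>x. transpose (f x :: real^'n^'n))"
  using bounded_linear.continuous[OF bounded_linear_transpose] .

lemma continuous_on_det3 [continuous_intros]:
  "continuous_on S f \<Longrightarrow> continuous_on S (\<lambda>x. det (f x :: real^3^3))"
  unfolding continuous_on_def det_3 by (auto intro!: tendsto_intros)

lemma invertible_iff_ker: "invertible (A::real^'n^'n) \<longleftrightarrow> (\<forall>x. A *v x = 0 \<longrightarrow> x = 0)"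
  using invertible_left_inverse matrix_left_invertible_ker by blast

lemma matrix_inv_inverse:
  "invertible (A::real^'n^'n) \<Longrightarrow> A ** matrix_inv A = mat 1 \<and> matrix_inv A ** A = mat 1"
  unfolding matrix_inv_def invertible_def by (rule someI_ex)

lemma inner_matrix_inv_symmetric:
  assumes "transpose J = J" "invertible J"
  shows "inner (J *v a) (matrix_inv J *v z) = inner a (z::real^'n)"
proof -
  have "inner (J *v a) (matrix_inv J *v z) = inner a (J *v (matrix_inv J *v z))"
    using inner_symmetric_matrix[OF assms(1)] by simp
  also have "\<dots> = inner a z"
    using matrix_inv_inverse[OF assms(2)] by (simp add: matrix_vector_mul_assoc)
  finally show ?thesis .
qed

lemma symmetric_eigenvalues_finite:
  assumes J: "transpose J = J"
  shows "finite {l. \<exists>v::real^'n. v \<noteq> 0 \<and> J *v v = l *\<^sub>R v}"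
proof -
  define L where "L = {l. \<exists>v::real^'n. v \<noteq> 0 \<and> J *v v = l *\<^sub>R v}"
  define f where "f l = (SOME v::real^'n. v \<noteq> 0 \<and> J *v v = l *\<^sub>R v)" for l
  have f: "f l \<noteq> 0 \<and> J *v f l = l *\<^sub>R f l" if "l \<in> L" for l
    using that unfolding L_def f_def by (metis (mono_tags, lifting) mem_Collect_eq someI_ex)
  have inj: "inj_on f L"
  proof (rule inj_onI)
    fix l1 l2 assume "l1 \<in> L" "l2 \<in> L" "f l1 = f l2"
    then have "l1 *\<^sub>R f l1 = l2 *\<^sub>R f l1" "f l1 \<noteq> 0" using f by metis+
    then show "l1 = l2" by (simp add: scaleR_cancel_right)
  qed
  have "pairwise orthogonal (f ` L)"
  proof (clarsimp simp: pairwise_def)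
    fix l1 l2 assume h: "l1 \<in> L" "l2 \<in> L" "f l1 \<noteq> f l2"
    have "l1 * inner (f l1) (f l2) = inner (J *v f l1) (f l2)" using f[OF h(1)] by simp
    also have "\<dots> = inner (f l1) (J *v f l2)" using inner_symmetric_matrix[OF J] by simp
    also have "\<dots> = l2 * inner (f l1) (f l2)" using f[OF h(2)] by simp
    finally have "(l1 - l2) * inner (f l1) (f l2) = 0" by (simp add: algebra_simps)
    then show "orthogonal (f l1) (f l2)" using h by (auto simp: orthogonal_def)
  qed
  moreover have "0 \<notin> f ` L" using f by auto
  ultimately have "finite (f ` L)"
    using pairwise_orthogonal_independent independent_bound by blast
  then show ?thesis using inj finite_imageD by (simp add: L_def)
qed

lemma pos_def_quadratic_lower_bound:
  assumes "\<And>v. v \<noteq> 0 \<Longrightarrow> inner v ((J::real^'n^'n) *v v) > 0"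
  obtains m where "m > 0" "\<And>v. m * (norm v)\<^sup>2 \<le> inner v (J *v v)"
proof -
  have cont: "continuous_on (sphere 0 1) (\<lambda>v::real^'n. inner v (J *v v))"
    by (intro continuous_intros bounded_bilinear.continuous_on[OF bounded_bilinear_matrix_vector_mult])
  have "sphere (0::real^'n) 1 \<noteq> {}"
    by (metis norm_axis_1 mem_sphere_0 empty_iff)
  then obtain v0 where v0: "v0 \<in> sphere 0 1" "\<And>y. y \<in> sphere 0 1 \<Longrightarrow> inner v0 (J *v v0) \<le> inner y (J *v y)"
    using continuous_attains_inf[OF compact_sphere _ cont] by blast
  define m where "m = inner v0 (J *v v0)"
  have "v0 \<noteq> 0" using v0(1) by auto
  then have "m > 0" using assms unfolding m_def by blast
  moreover have "m * (norm v)\<^sup>2 \<le> inner v (J *v v)" for v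
  proof (cases "v = 0")
    case False
    define u where "u = (1 / norm v) *\<^sub>R v"
    have "u \<in> sphere 0 1" using False by (simp add: u_def)
    then have "m \<le> inner u (J *v u)" using v0(2) m_def by blast
    moreover have "v = norm v *\<^sub>R u" using False by (simp add: u_def)
    then have "inner v (J *v v) = (norm v)\<^sup>2 * inner u (J *v u)"
      by (metis inner_scaleR_left inner_scaleR_right matrix_vector_mult_scaleR mult.assoc power2_eq_square)
    ultimately show ?thesis using mult_right_mono[of m "inner u (J *v u)" "(norm v)\<^sup>2"]
      by (simp add: mult.commute)
  qed simp
  ultimately show thesis using that by blast
qed

lemma trace_le_norm: "trace (A::real^'n^'n) \<le> CARD('n) * norm A"
proof -
  have "A$i$i \<le> norm A" for i
  proof -
    have "A$i$i \<le> \<bar>A$i$i\<bar>" by simp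
    also have "\<dots> \<le> norm (A$i)" by (rule component_le_norm_cart)
    also have "\<dots> \<le> norm A" by (rule Finite_Cartesian_Product.norm_nth_le)
    finally show ?thesis .
  qed
  then show ?thesis
    unfolding trace_def using sum_bounded_above[of UNIV "\<lambda>i. A$i$i" "norm A"] by simp
qed

lemma inner_self_eq_trace: "inner (R::real^3^3) R = trace (transpose R ** R)"
  by (simp add: inner_vec_def trace_def matrix_matrix_mult_def transpose_def sum_3)

definition orth_defect :: "real^'n^'n \<Rightarrow> real^'n^'n" where
  "orth_defect R = transpose R ** R - mat 1"

lemma orth_defect_symmetric: "transpose (orth_defect R) = orth_defect R"
  by (simp add: orth_defect_def transpose_def vec_eq_iff matrix_matrix_mult_def mat_def mult.commute)

lemma orth_defect_eq_0_iff: "orth_defect R = 0 \<longleftrightarrow> orthogonal_matrix R"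
  by (simp add: orth_defect_def orthogonal_matrix)

lemma norm_le_orth_defect: "(norm R)\<^sup>2 \<le> 3 * (norm (orth_defect (R::real^3^3)) + 1)"
proof -
  have "(norm R)\<^sup>2 = trace (orth_defect R) + 3"
    by (simp add: power2_norm_eq_inner inner_self_eq_trace orth_defect_def trace_sub trace_I)
  then show ?thesis using trace_le_norm[of "orth_defect R"] by (simp add: algebra_simps)
qed

lemma small_orth_defect_gram_ker:
  assumes "norm (orth_defect R) < 1" "(transpose R ** R) *v v = 0"
  shows "v = 0"
proof (rule ccontr)
  assume v: "v \<noteq> 0"
  have "orth_defect R *v v = - v"
    using assms(2) by (simp add: orth_defect_def matrix_vector_mult_diff_rdistrib del: transpose_matrix_vector)
  then have "norm v \<le> norm (orth_defect R) * norm v"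
    using norm_matrix_vector_le[of "orth_defect R" v] by simp
  moreover have "norm (orth_defect R) * norm v < norm v" using assms(1) v by simp
  ultimately show False by simp
qed

lemma small_orth_defect_invertible:
  assumes "norm (orth_defect R) < 1"
  shows "invertible (R::real^'n^'n)"
  unfolding invertible_iff_ker
  using small_orth_defect_gram_ker[OF assms] by (metis matrix_vector_mul_assoc matrix_vector_mult_0_right)

lemma outer_mult_vector: "outer a b *v w = inner b w *\<^sub>R a"
  by (simp add: vec_eq_iff outer_def matrix_vector_mult_def inner_vec_def sum_3 algebra_simps)

lemma matrix_mult_outer: "A ** outer a b = outer (A *v a) b"
  by (simp add: vec_eq_iff outer_def matrix_vector_mult_def matrix_matrix_mult_def sum_3 algebra_simps)

lemma transpose_outer: "transpose (outer a b) = outer b a"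
  by (simp add: vec_eq_iff outer_def transpose_def)

lemma outer_scaleR_left: "outer (c *\<^sub>R a) b = c *\<^sub>R outer a b"
  by (simp add: vec_eq_iff outer_def)

lemma inner_outer: "inner (outer p u) A = inner p (A *v u)"
  by (simp add: inner_vec_def matrix_vector_mult_def outer_def sum_3 algebra_simps)

lemma bounded_bilinear_outer: "bounded_bilinear outer"
proof -
  have "bilinear outer" unfolding bilinear_def linear_iff
    by (auto simp: vec_eq_iff outer_def algebra_simps)
  then show ?thesis using bilinear_conv_bounded_bilinear by blast
qed

lemma continuous_outer [continuous_intros]:
  "continuous F f \<Longrightarrow> continuous F g \<Longrightarrow> continuous F (\<lambda>x. outer (f x) (g x))"
  using bounded_bilinear.continuous[OF bounded_bilinear_outer] .

lemma inner_orth_defect_derivative: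
  "inner (orth_defect R) (transpose R ** R' + transpose R' ** R) = 2 * inner (R ** orth_defect R) (R'::real^3^3)"
proof -
  have "inner (orth_defect R) (transpose R' ** R)
      = inner (transpose (orth_defect R)) (transpose (transpose R' ** R))"
    by (simp add: inner_transpose_transpose)
  also have "\<dots> = inner (R ** orth_defect R) R'"
    by (simp add: orth_defect_symmetric matrix_transpose_mul inner_matrix_mult_left)
  finally show ?thesis by (simp add: inner_add_right inner_matrix_mult_left)
qed

lemma inner_angmom_derivative:
  assumes "transpose J = J"
  shows "inner p (R *v (J *v W') + R' *v (J *v W))
       = inner (outer p (J *v W)) R' + inner (J *v (transpose R *v p)) W'"
proof -
  have "inner p (R *v (J *v W')) = inner (J *v (transpose R *v p)) W'"
    using inner_matrix_vector_mult[of p R] inner_symmetric_matrix[OF assms]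
    by (simp del: transpose_matrix_vector)
  then show ?thesis by (simp add: inner_add_right inner_outer)
qed

lemma symmetric_outer_eigenvector:
  assumes "outer w u = outer u w" "w \<noteq> 0"
  shows "u = (inner u w / inner w w) *\<^sub>R w"
proof -
  have "inner u w *\<^sub>R w = inner w w *\<^sub>R u"
    using arg_cong[OF assms(1), of "\<lambda>A. A *v w"] by (simp add: outer_mult_vector)
  then have "(1 / inner w w) *\<^sub>R (inner w w *\<^sub>R u) = (1 / inner w w) *\<^sub>R (inner u w *\<^sub>R w)"
    by simp
  then show ?thesis using assms(2) by simp
qed

lemma commuting_outer_eigenvector:
  assumes "X ** outer w u = outer w u ** X" "inner u w \<noteq> 0"
  shows "X *v w = (inner u (X *v w) / inner u w) *\<^sub>R w"
proof -
  have "inner u w *\<^sub>R (X *v w) = inner u (X *v w) *\<^sub>R w"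
    using arg_cong[OF assms(1), of "\<lambda>A. A *v w"]
    by (simp add: matrix_vector_mul_assoc[symmetric] outer_mult_vector matrix_vector_mult_scaleR)
  then have "(1 / inner u w) *\<^sub>R (inner u w *\<^sub>R (X *v w)) = (1 / inner u w) *\<^sub>R (inner u (X *v w) *\<^sub>R w)"
    by simp
  then show ?thesis using assms(2) by simp
qed

lemma hat_mult_vector: "hat W *v a = cross3 W a"
  by (simp add: hat_def cross3_simps vec_eq_iff forall_3 matrix_vector_mult_def sum_3 vector_3 algebra_simps)

lemma inner_hat_symmetric:
  assumes "transpose S = S"
  shows "inner S (hat W) = 0"
proof -
  have s: "S$i$j = S$j$i" for i j
    using arg_cong[OF assms, of "\<lambda>A. A$j$i"] by (simp add: transpose_def)
  have "inner S (hat W) = S$1$2 * (-W$3) + S$1$3 * W$2 + S$2$1 * W$3 + S$2$3 * (-W$1)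
                         + S$3$1 * (-W$2) + S$3$2 * W$1"
    by (simp add: inner_vec_def hat_def sum_3 vector_3)
  also have "\<dots> = 0" using s[of 1 2] s[of 1 3] s[of 2 3] by (simp add: algebra_simps)
  finally show ?thesis .
qed

lemma transpose_gram_eigenvector:
  assumes "(transpose R ** R) *v w = \<mu> *\<^sub>R w" "\<mu> \<noteq> 0"
    and "transpose R *v p = c *\<^sub>R w" "invertible (R::real^'n^'n)"
  shows "p = R *v ((c / \<mu>) *\<^sub>R w)"
proof -
  have "transpose R *v (p - R *v ((c / \<mu>) *\<^sub>R w)) = 0"
    using assms(1-3)
    by (simp add: matrix_vector_mult_diff_distrib matrix_vector_mul_assoc matrix_vector_mult_scaleR
        del: transpose_matrix_vector)
  then show ?thesis
    using transpose_invertible[OF assms(4)] invertible_iff_ker by (metis eq_iff_diff_eq_0)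
qed

section \<open>Angular momentum at critical points\<close>

text \<open>At a critical point of \<open>V\<close> with energy error \<open>e\<close>, \<open>\<Omega>\<close> is an eigenvector of \<open>J\<close> (eigenvalue
  \<open>l\<close>) and of \<open>R\<^sup>T R\<close> (eigenvalue \<open>1 + x\<close>), and \<open>|\<pi>\<^sub>0|\<^sup>2\<close> is this function of \<open>l\<close>, \<open>\<kappa> = k1/k2\<close>,
  \<open>e\<close>, \<open>E = E(\<Omega>)\<close> and \<open>x\<close>.\<close>

definition critical_momentum_sq :: "real \<Rightarrow> real \<Rightarrow> real \<Rightarrow> real \<Rightarrow> real \<Rightarrow> real" where
  "critical_momentum_sq l \<kappa> e E x = 2*l*E*(1+x) + 4*\<kappa>*e*E + 2*\<kappa>^2*e^2*E/(l*(1+x))"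

lemma norm_momentum_at_critical_point:
  assumes JW: "J *v W = l *\<^sub>R W" and l: "l > 0"
    and MW: "(transpose R ** R) *v W = (1 + x) *\<^sub>R W" and x: "1 + x > 0"
    and Rp: "transpose R *v p = (- (\<kappa> * e)) *\<^sub>R W" and R: "invertible R"
  shows "(norm (angmom J R W - p))\<^sup>2 = critical_momentum_sq l \<kappa> e (energy J W) x"
proof -
  define E where "E = energy J W"
  define M where "M = transpose R ** R"
  have lWW: "l * inner W W = 2 * E" by (simp add: E_def energy_def JW)
  have pi: "angmom J R W = l *\<^sub>R (R *v W)"
    by (simp add: angmom_def JW matrix_vector_mult_scaleR)
  have RR: "inner (R *v a) (R *v b) = inner (M *v a) b" for a b
    using inner_matrix_vector_mult[of "R *v a" R b]
    by (simp add: M_def matrix_vector_mul_assoc inner_commute del: transpose_matrix_vector)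
  have pi_pi: "inner (angmom J R W) (angmom J R W) = 2 * l * E * (1 + x)"
  proof -
    have "inner (angmom J R W) (angmom J R W) = l * (1 + x) * (l * inner W W)"
      using MW by (simp add: pi RR M_def)
    then show ?thesis using lWW by simp
  qed
  have pi_p: "inner (angmom J R W) p = - 2 * \<kappa> * e * E"
  proof -
    have "inner (angmom J R W) p = l * inner W (transpose R *v p)"
      using inner_matrix_vector_mult[of p R W] by (simp add: pi inner_commute del: transpose_matrix_vector)
    also have "\<dots> = - (\<kappa> * e) * (l * inner W W)" by (simp add: Rp del: transpose_matrix_vector)
    finally show ?thesis using lWW by simp
  qed
  have p_p: "inner p p = 2 * \<kappa>^2 * e^2 * E / (l * (1 + x))"
  proof -
    have "p = R *v ((- (\<kappa> * e) / (1 + x)) *\<^sub>R W)"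
      using transpose_gram_eigenvector[OF MW _ Rp R] x by simp
    then have "inner p p = (\<kappa> * e / (1 + x))^2 * ((1 + x) * inner W W)"
      using MW by (simp add: RR M_def matrix_vector_mult_scaleR matrix_vector_mult_uminus power2_eq_square)
    also have "\<dots> = (\<kappa> * e)^2 / (1 + x) * inner W W"
      using x by (simp add: power_divide power2_eq_square)
    also have "inner W W = 2 * E / l" using lWW l by (simp add: field_simps)
    finally show ?thesis using x l by (simp add: power_mult_distrib field_simps)
  qed
  have "(norm (angmom J R W - p))\<^sup>2
      = inner (angmom J R W) (angmom J R W) - 2 * inner (angmom J R W) p + inner p p"
    by (simp add: power2_norm_eq_inner inner_diff_left inner_diff_right inner_commute)
  also have "\<dots> = critical_momentum_sq l \<kappa> e E x"
    by (simp add: pi_pi pi_p p_p critical_momentum_sq_def)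
  finally show ?thesis by (simp add: E_def)
qed

lemma critical_momentum_sq_ne:
  fixes l E0 k a e x :: real
  assumes l: "l > 0" and E0: "E0 > 0" and k: "k > 0" and a: "a > 0"
    and e: "e \<noteq> 0" "\<bar>e\<bar> \<le> E0/2" "\<bar>e\<bar> \<le> l / (2*k)"
    and x: "\<bar>x\<bar> \<le> 1/2" "x * (1 + x) = 2 * a * e * (E0 + e)"
  shows "critical_momentum_sq l k e (E0 + e) x \<noteq> 2 * l * E0"
proof -
  define E where "E = E0 + e"
  have E: "E > 0" using e E0 by (simp add: E_def)
  have x1: "1 + x \<ge> 1/2" using x by linarith
  have lx: "l * (1 + x) > 0" using l x1 by simp
  have last_nonneg: "2*k^2*e^2*E/(l*(1+x)) \<ge> 0" using E lx by simp
  have "2*l*e + 2*l*E*x + 4*k*e*E + 2*k^2*e^2*E/(l*(1+x)) \<noteq> 0"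
  proof (cases "e > 0")
    case True
    have "x * (1 + x) > 0" using x(2) True a E by (simp add: E_def)
    then have "x > 0" using x1 by (simp add: zero_less_mult_iff)
    then have "2*l*E*x > 0" using l E by simp
    moreover have "2*l*e > 0" "4*k*e*E > 0" using l True k E by auto
    ultimately show ?thesis using last_nonneg by linarith
  next
    case False
    then have en: "e < 0" using e(1) by simp
    have "x * (1 + x) < 0" using x(2) en a E by (simp add: E_def mult_pos_neg mult_neg_pos)
    then have "x < 0" using x1 by (simp add: mult_less_0_iff)
    then have t2: "2*l*E*x < 0" using l E by (simp add: mult_pos_neg)
    have t1: "2*l*e < 0" using l en by (simp add: mult_pos_neg)
    have q: "k * \<bar>e\<bar> / (l * (1 + x)) \<le> 1"
    proof -
      have "k * \<bar>e\<bar> \<le> l / 2" using e(3) k by (simp add: field_simps)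
      also have "\<dots> \<le> l * (1 + x)" using l x1 by simp
      finally show ?thesis using lx by simp
    qed
    have "2*k^2*e^2*E/(l*(1+x)) = 2*k*\<bar>e\<bar>*E * (k * \<bar>e\<bar> / (l * (1 + x)))"
      by (simp add: power2_eq_square abs_mult_self_eq)
    also have "\<dots> \<le> 2*k*\<bar>e\<bar>*E"
      using mult_left_mono[OF q, of "2*k*\<bar>e\<bar>*E"] k E by simp
    finally have "2*k^2*e^2*E/(l*(1+x)) \<le> 2*k*\<bar>e\<bar>*E" .
    moreover have "4*k*e*E = - 4*k*\<bar>e\<bar>*E" using en by simp
    moreover have "2*k*\<bar>e\<bar>*E > 0" using k E en by (intro mult_pos_pos) auto
    ultimately show ?thesis using t1 t2 by linarith
  qed
  then show ?thesis by (simp add: critical_momentum_sq_def E_def algebra_simps)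
qed

lemma abs_le_twice_abs_mult_one_plus:
  fixes x :: real
  assumes "\<bar>x\<bar> \<le> 1/2"
  shows "\<bar>x\<bar> \<le> 2 * \<bar>x * (1 + x)\<bar>"
proof -
  have "1 + x \<ge> 1/2" using assms by linarith
  then have "\<bar>x * (1 + x)\<bar> = \<bar>x\<bar> * (1 + x)" by (simp add: abs_mult)
  moreover have "\<bar>x\<bar> * (1/2) \<le> \<bar>x\<bar> * (1 + x)" using \<open>1 + x \<ge> 1/2\<close> by (intro mult_left_mono) auto
  ultimately show ?thesis by linarith
qed

lemma critical_momentum_sq_dist_le:
  fixes l E0 k a e x :: real
  assumes l: "l > 0" and E0: "E0 > 0" and k: "k > 0" and a: "a > 0"
    and e: "\<bar>e\<bar> \<le> 1" "\<bar>e\<bar> \<le> E0/2"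
    and x: "\<bar>x\<bar> \<le> 1/2" "x * (1 + x) = 2 * a * e * (E0 + e)"
  shows "\<bar>critical_momentum_sq l k e (E0 + e) x - 2 * l * E0\<bar>
     \<le> (2*l + 8*l*a*(E0+1)^2 + 4*k*(E0+1) + 4*k^2*(E0+1)/l) * \<bar>e\<bar>"
proof -
  define E where "E = E0 + e"
  have E: "E > 0" "E \<le> E0 + 1" using e E0 by (auto simp: E_def)
  have x1: "1 + x \<ge> 1/2" using x by linarith
  have lx: "l * (1 + x) > 0" using l x1 by simp
  have x_le: "\<bar>x\<bar> \<le> 4 * a * \<bar>e\<bar> * (E0+1)"
  proof -
    have "\<bar>x\<bar> \<le> 2 * \<bar>x * (1 + x)\<bar>" by (rule abs_le_twice_abs_mult_one_plus[OF x(1)])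
    also have "\<dots> = 4 * a * \<bar>e\<bar> * E" using x(2) a E by (simp add: abs_mult E_def)
    also have "\<dots> \<le> 4 * a * \<bar>e\<bar> * (E0+1)" using E a by (intro mult_left_mono) auto
    finally show ?thesis .
  qed
  have b1: "\<bar>2*l*e\<bar> = 2*l*\<bar>e\<bar>" using l by (simp add: abs_mult)
  have b2: "\<bar>2*l*E*x\<bar> \<le> 8*l*a*(E0+1)^2 * \<bar>e\<bar>"
  proof -
    have "\<bar>2*l*E*x\<bar> = 2*l*E*\<bar>x\<bar>" using l E by (simp add: abs_mult)
    also have "\<dots> \<le> 2*l*(E0+1)*(4 * a * \<bar>e\<bar> * (E0+1))"
      using l E x_le by (intro mult_mono) auto
    also have "\<dots> = 8*l*a*(E0+1)^2 * \<bar>e\<bar>" by (simp add: power2_eq_square algebra_simps)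
    finally show ?thesis .
  qed
  have b3: "\<bar>4*k*e*E\<bar> \<le> 4*k*(E0+1)*\<bar>e\<bar>"
  proof -
    have "\<bar>4*k*e*E\<bar> = 4*k*\<bar>e\<bar>*E" using k E by (simp add: abs_mult)
    also have "\<dots> \<le> 4*k*\<bar>e\<bar>*(E0+1)" using k E by (intro mult_left_mono) auto
    finally show ?thesis by (simp add: mult_ac)
  qed
  have b4: "\<bar>2*k^2*e^2*E/(l*(1+x))\<bar> \<le> 4*k^2*(E0+1)/l * \<bar>e\<bar>"
  proof -
    have "2*k^2*e^2*E/(l*(1+x)) \<le> 2*k^2*e^2*E/(l*(1/2))"
      using lx l x1 E by (intro divide_left_mono mult_left_mono mult_pos_pos) auto
    also have "\<dots> = 4*k^2*E/l * (\<bar>e\<bar> * \<bar>e\<bar>)" using l by (simp add: field_simps power2_eq_square)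
    also have "\<dots> \<le> 4*k^2*(E0+1)/l * (\<bar>e\<bar> * 1)"
      using e E l k by (intro mult_mono divide_right_mono mult_left_mono) auto
    finally show ?thesis using E lx by simp
  qed
  have abs_add4_le: "\<bar>A+B+C+D\<bar> \<le> \<bar>A\<bar>+\<bar>B\<bar>+\<bar>C\<bar>+\<bar>D\<bar>" for A B C D :: real
    by arith
  have "critical_momentum_sq l k e (E0 + e) x - 2 * l * E0
      = 2*l*e + 2*l*E*x + 4*k*e*E + 2*k^2*e^2*E/(l*(1+x))"
    by (simp add: critical_momentum_sq_def E_def algebra_simps)
  also have "\<bar>\<dots>\<bar> \<le> \<bar>2*l*e\<bar> + \<bar>2*l*E*x\<bar> + \<bar>4*k*e*E\<bar> + \<bar>2*k^2*e^2*E/(l*(1+x))\<bar>"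
    by (rule abs_add4_le)
  also have "\<dots> \<le> (2*l + 8*l*a*(E0+1)^2 + 4*k*(E0+1) + 4*k^2*(E0+1)/l) * \<bar>e\<bar>"
    using b1 b2 b3 b4 by (simp add: algebra_simps)
  finally show ?thesis .
qed

lemma critical_momentum_sq_isolated:
  fixes l E0 k a P :: real
  assumes l: "l > 0" and E0: "E0 > 0" and k: "k > 0" and a: "a > 0"
  shows "\<exists>\<delta>>0. \<forall>e. 0 < \<bar>e\<bar> \<and> \<bar>e\<bar> \<le> \<delta> \<longrightarrow> (\<forall>x. \<bar>x\<bar> \<le> 1/2 \<and> x * (1 + x) = 2 * a * e * (E0 + e)
      \<longrightarrow> critical_momentum_sq l k e (E0 + e) x \<noteq> P)"
proof -
  define C where "C = 2*l + 8*l*a*(E0+1)^2 + 4*k*(E0+1) + 4*k^2*(E0+1)/l"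
  have C: "C > 0" unfolding C_def using l a k E0 by (intro add_pos_nonneg) auto
  define d where "d = P - 2*l*E0"
  define \<delta>0 where "\<delta>0 = min 1 (min (E0/2) (l / (2*k)))"
  \<comment> \<open>If \<open>P = 2 l E0\<close> the sign lemma suffices; otherwise the distance bound excludes small \<open>e\<close>.\<close>
  define \<delta> where "\<delta> = (if d = 0 then \<delta>0 else min \<delta>0 (\<bar>d\<bar> / (2*C)))"
  have "\<delta> > 0" using E0 l k C by (simp add: \<delta>_def \<delta>0_def)
  moreover have "critical_momentum_sq l k e (E0 + e) x \<noteq> P"
    if e: "0 < \<bar>e\<bar>" "\<bar>e\<bar> \<le> \<delta>" and x: "\<bar>x\<bar> \<le> 1/2" "x * (1 + x) = 2 * a * e * (E0 + e)" for e x
  proof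
    assume eq: "critical_momentum_sq l k e (E0 + e) x = P"
    have "\<bar>e\<bar> \<le> \<delta>0" using e by (auto simp: \<delta>_def split: if_splits)
    then have e1: "\<bar>e\<bar> \<le> 1" "\<bar>e\<bar> \<le> E0/2" "\<bar>e\<bar> \<le> l / (2*k)" by (auto simp: \<delta>0_def)
    have "d \<noteq> 0" using critical_momentum_sq_ne[OF l E0 k a _ e1(2,3) x] e eq by (auto simp: d_def)
    then have "C * \<bar>e\<bar> \<le> \<bar>d\<bar> / 2" using e C by (simp add: \<delta>_def field_simps)
    moreover have "\<bar>d\<bar> \<le> C * \<bar>e\<bar>"
      using critical_momentum_sq_dist_le[OF l E0 k a e1(1,2) x] eq by (simp add: d_def C_def mult.commute)
    ultimately show False using \<open>d \<noteq> 0\<close> by simp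
  qed
  ultimately show ?thesis by blast
qed

lemma finite_uniform_radius:
  fixes P :: "'a \<Rightarrow> real \<Rightarrow> bool"
  assumes "finite L" "\<And>l. l \<in> L \<Longrightarrow> \<exists>\<delta>>0. \<forall>e. 0 < \<bar>e\<bar> \<and> \<bar>e\<bar> \<le> \<delta> \<longrightarrow> P l e"
  shows "\<exists>\<delta>>0. \<forall>l\<in>L. \<forall>e. 0 < \<bar>e\<bar> \<and> \<bar>e\<bar> \<le> \<delta> \<longrightarrow> P l e"
  using assms
proof (induction rule: finite_induct)
  case empty
  show ?case using zero_less_one by blast
next
  case (insert l L)
  obtain \<delta>1 where "\<delta>1 > 0" "\<forall>l\<in>L. \<forall>e. 0 < \<bar>e\<bar> \<and> \<bar>e\<bar> \<le> \<delta>1 \<longrightarrow> P l e"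
    using insert by blast
  moreover obtain \<delta>2 where "\<delta>2 > 0" "\<forall>e. 0 < \<bar>e\<bar> \<and> \<bar>e\<bar> \<le> \<delta>2 \<longrightarrow> P l e"
    using insert by blast
  ultimately show ?case by (intro exI[of _ "min \<delta>1 \<delta>2"]) auto
qed

section \<open>Lyapunov functions along trajectories\<close>

lemma DERIV_within_nonpos_imp_nonincreasing:
  fixes f :: "real \<Rightarrow> real"
  assumes deriv: "\<And>t. t \<ge> 0 \<Longrightarrow> (f has_real_derivative D t) (at t within {0..})"
    and nonpos: "\<And>t. t \<ge> 0 \<Longrightarrow> D t \<le> 0" and "0 \<le> a" "a \<le> b"
  shows "f b \<le> f a"
proof -
  have "\<exists>s\<in>{a..b}. f b - f a = D s * (b - a)"
  proof (rule mvt_very_simple[of a b f "\<lambda>s h. D s * h"])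
    fix s assume "a \<le> s" "s \<le> b"
    then have "(f has_real_derivative D s) (at s within {0..})" using deriv \<open>0 \<le> a\<close> by simp
    then have "(f has_real_derivative D s) (at s within {a..b})"
      by (rule has_field_derivative_subset) (use \<open>0 \<le> a\<close> in auto)
    then show "(f has_derivative (\<lambda>h. D s * h)) (at s within {a..b})"
      by (simp add: has_field_derivative_def)
  qed fact
  then obtain s where "s \<in> {a..b}" "f b - f a = D s * (b - a)" by blast
  moreover have "D s * (b - a) \<le> 0"
    using nonpos[of s] \<open>s \<in> {a..b}\<close> assms(3,4) by (intro mult_nonpos_nonneg) auto
  ultimately show ?thesis by linarith
qed

lemma has_vector_derivative_imp_continuous_on:
  assumes "\<And>t. t \<in> S \<Longrightarrow> (f has_vector_derivative f' t) (at t within S)"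
  shows "continuous_on S f"
  using assms has_vector_derivative_continuous continuous_on_eq_continuous_within by blast

lemma continuous_nonvanishing_pos:
  fixes f :: "real \<Rightarrow> real"
  assumes cont: "continuous_on {0..} f" and nz: "\<And>t. t \<ge> 0 \<Longrightarrow> f t \<noteq> 0"
    and "f 0 > 0" "t \<ge> 0"
  shows "f t > 0"
proof (rule ccontr)
  assume "\<not> f t > 0"
  moreover have "continuous_on {0..t} f" using cont by (rule continuous_on_subset) auto
  ultimately obtain s where "0 \<le> s" "s \<le> t" "f s = 0"
    using IVT2'[of f t 0 0] assms(3,4) by auto
  then show False using nz by auto
qed

lemma compact_Collect_le:
  fixes f g :: "'a::metric_space \<Rightarrow> real"
  assumes "compact S" "continuous_on S f" "continuous_on S g"
  shows "compact {x \<in> S. f x \<le> g x}"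
proof -
  have "closed {x \<in> S. f x \<le> g x}"
    using assms by (intro continuous_on_closed_Collect_le compact_imp_closed)
  moreover have "S \<inter> {x \<in> S. f x \<le> g x} = {x \<in> S. f x \<le> g x}" by blast
  ultimately show ?thesis using compact_Int_closed[OF assms(1)] by metis
qed

lemma det_pos_along_path:
  fixes Rt :: "real \<Rightarrow> mat3"
  assumes "continuous_on {0..} Rt" "\<And>t. t \<ge> 0 \<Longrightarrow> det (Rt t) \<noteq> 0" "det (Rt 0) > 0" "t \<ge> 0"
  shows "det (Rt t) > 0"
  using continuous_nonvanishing_pos[where f = "\<lambda>t. det (Rt t)", OF _ assms(2-4)]
    continuous_on_det3[OF assms(1)] by blast

lemma has_real_derivative_norm_power2:
  fixes f :: "real \<Rightarrow> 'a::real_inner"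
  assumes "(f has_vector_derivative f') (at t within S)"
  shows "((\<lambda>t. (norm (f t))\<^sup>2) has_real_derivative 2 * inner (f t) f') (at t within S)"
  using bounded_bilinear.has_vector_derivative[OF bounded_bilinear_inner assms assms]
  by (simp add: power2_norm_eq_inner has_real_derivative_iff_has_vector_derivative inner_commute)

lemma lyapunov_eventually_below:
  fixes x :: "real \<Rightarrow> 'a::metric_space" and V G :: "'a \<Rightarrow> real"
  assumes S: "compact S" "continuous_on S V" "continuous_on S G"
    and traj: "\<And>t. t \<ge> 0 \<Longrightarrow> x t \<in> S"
    and V_nonneg: "\<And>y. y \<in> S \<Longrightarrow> 0 \<le> V y"
    and G_pos: "\<And>y. y \<in> S \<Longrightarrow> 0 < V y \<Longrightarrow> 0 < G y"
    and deriv: "\<And>t. t \<ge> 0 \<Longrightarrow> ((\<lambda>t. V (x t)) has_real_derivative - G (x t)) (at t within {0..})"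
    and "\<epsilon> > 0"
  shows "\<exists>T\<ge>0. V (x T) < \<epsilon>"
proof (rule ccontr)
  assume "\<not> (\<exists>T\<ge>0. V (x T) < \<epsilon>)"
  then have in_K: "x t \<in> {y \<in> S. \<epsilon> \<le> V y}" if "t \<ge> 0" for t
    using that traj by force
  have "compact {y \<in> S. \<epsilon> \<le> V y}"
    using S by (intro compact_Collect_le continuous_on_const)
  \<comment> \<open>\<open>G\<close> is bounded below on the compact set \<open>{\<epsilon> \<le> V}\<close> by a positive \<open>m\<close>, so \<open>V\<close> decreases at rate \<open>m\<close>.\<close>
  then obtain y0 where y0: "y0 \<in> S" "\<epsilon> \<le> V y0" "\<And>y. y \<in> S \<Longrightarrow> \<epsilon> \<le> V y \<Longrightarrow> G y0 \<le> G y"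
    using continuous_attains_inf[of "{y \<in> S. \<epsilon> \<le> V y}" G] in_K[of 0]
      continuous_on_subset[OF S(3), of "{y \<in> S. \<epsilon> \<le> V y}"] by blast
  define m where "m = G y0"
  have m: "m > 0" using G_pos y0 \<open>\<epsilon> > 0\<close> by (simp add: m_def)
  define T where "T = (V (x 0) + 1) / m"
  have "T \<ge> 0" using m V_nonneg[OF traj[of 0]] by (simp add: T_def)
  have "V (x T) + m * T \<le> V (x 0) + m * 0"
  proof (rule DERIV_within_nonpos_imp_nonincreasing[of "\<lambda>t. V (x t) + m * t" "\<lambda>t. - G (x t) + m"])
    show "((\<lambda>t. V (x t) + m * t) has_real_derivative - G (x t) + m) (at t within {0..})" if "t \<ge> 0" for t
    proof -
      have "((\<lambda>t. m * t) has_real_derivative m * 1) (at t within {0..})"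
        by (rule DERIV_cmult[OF DERIV_ident])
      from DERIV_add[OF deriv[OF that] this] show ?thesis by simp
    qed
    show "- G (x t) + m \<le> 0" if "t \<ge> 0" for t
      using y0(3) in_K[OF that] by (simp add: m_def)
  qed (use \<open>T \<ge> 0\<close> in auto)
  moreover have "m * T = V (x 0) + 1" using m by (simp add: T_def)
  ultimately show False using V_nonneg[OF traj[OF \<open>T \<ge> 0\<close>]] by linarith
qed

lemma lyapunov_tendsto_zero:
  fixes x :: "real \<Rightarrow> 'a::metric_space" and V G :: "'a \<Rightarrow> real"
  assumes S: "compact S" "continuous_on S V" "continuous_on S G"
    and traj: "\<And>t. t \<ge> 0 \<Longrightarrow> x t \<in> S"
    and V_nonneg: "\<And>y. y \<in> S \<Longrightarrow> 0 \<le> V y"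
    and G_nonneg: "\<And>y. y \<in> S \<Longrightarrow> 0 \<le> G y"
    and G_pos: "\<And>y. y \<in> S \<Longrightarrow> 0 < V y \<Longrightarrow> 0 < G y"
    and deriv: "\<And>t. t \<ge> 0 \<Longrightarrow> ((\<lambda>t. V (x t)) has_real_derivative - G (x t)) (at t within {0..})"
  shows "((\<lambda>t. V (x t)) \<longlongrightarrow> 0) at_top"
proof (rule tendstoI)
  fix \<epsilon> :: real assume "\<epsilon> > 0"
  then obtain T where T: "T \<ge> 0" "V (x T) < \<epsilon>"
    using lyapunov_eventually_below[OF S traj V_nonneg G_pos deriv] by blast
  show "eventually (\<lambda>t. dist (V (x t)) 0 < \<epsilon>) at_top"
    using eventually_ge_at_top[of T]
  proof (rule eventually_mono)
    fix t assume "T \<le> t"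
    then have "V (x t) \<le> V (x T)"
      using DERIV_within_nonpos_imp_nonincreasing[OF deriv] G_nonneg traj T(1) by force
    then show "dist (V (x t)) 0 < \<epsilon>" using T V_nonneg[OF traj[of t]] \<open>T \<le> t\<close> by simp
  qed
qed

lemma tendsto_infdist_zero_set:
  fixes x :: "real \<Rightarrow> 'a::metric_space" and V :: "'a \<Rightarrow> real"
  assumes S: "compact S" "continuous_on S V"
    and traj: "\<And>t. t \<ge> 0 \<Longrightarrow> x t \<in> S"
    and lim: "((\<lambda>t. V (x t)) \<longlongrightarrow> 0) at_top"
  shows "((\<lambda>t. infdist (x t) {y \<in> S. V y = 0}) \<longlongrightarrow> 0) at_top"
proof (rule tendstoI)
  fix \<epsilon> :: real assume "\<epsilon> > 0"
  define Z where "Z = {y \<in> S. V y = 0}"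
  define K where "K = {y \<in> S. \<epsilon> \<le> infdist y Z}"
  have "compact K"
    unfolding K_def using S by (intro compact_Collect_le continuous_intros)
  \<comment> \<open>\<open>|V|\<close> is bounded below on \<open>K\<close> by some \<open>m > 0\<close>; once \<open>|V(x t)| < m\<close>, \<open>x t\<close> lies outside \<open>K\<close>.\<close>
  obtain m where m: "m > 0" "\<And>y. y \<in> K \<Longrightarrow> m \<le> \<bar>V y\<bar>"
  proof (cases "K = {}")
    case False
    then obtain y0 where y0: "y0 \<in> K" "\<And>y. y \<in> K \<Longrightarrow> \<bar>V y0\<bar> \<le> \<bar>V y\<bar>"
      using continuous_attains_inf[OF \<open>compact K\<close>, of "\<lambda>y. \<bar>V y\<bar>"]
        continuous_on_subset[OF S(2), of K] continuous_on_rabs by (force simp: K_def)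
    have "V y0 \<noteq> 0" using y0(1) \<open>\<epsilon> > 0\<close> by (auto simp: K_def Z_def)
    then show thesis using that[of "\<bar>V y0\<bar>"] y0(2) by simp
  qed (use that[of 1] in simp)
  have "eventually (\<lambda>t. \<bar>V (x t)\<bar> < m \<and> t \<ge> 0) at_top"
    using tendstoD[OF lim \<open>m > 0\<close>] eventually_ge_at_top[of 0] by eventually_elim simp
  then show "eventually (\<lambda>t. dist (infdist (x t) {y \<in> S. V y = 0}) 0 < \<epsilon>) at_top"
  proof (rule eventually_mono)
    fix t assume "\<bar>V (x t)\<bar> < m \<and> t \<ge> 0"
    then have "x t \<notin> K" "x t \<in> S" using m traj by force+
    then show "dist (infdist (x t) {y \<in> S. V y = 0}) 0 < \<epsilon>"
      by (simp add: K_def Z_def infdist_nonneg)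
  qed
qed

section \<open>The controlled rigid body\<close>

locale controlled_rigid_body =
  fixes J R0 :: mat3 and W0 :: vec3 and k0 k1 k2 :: real
  assumes J_spd: "sym_pos_def_mat J"
    and k0_pos: "k0 > 0" and k1_pos: "k1 > 0" and k2_pos: "k2 > 0"
begin

abbreviation V :: "mat3 \<Rightarrow> vec3 \<Rightarrow> real" where
  "V \<equiv> lyapV J k0 k1 k2 R0 W0"

definition energy_err :: "vec3 \<Rightarrow> real" where
  "energy_err W = energy J W - energy J W0"

definition momentum_err :: "mat3 \<Rightarrow> vec3 \<Rightarrow> vec3" where
  "momentum_err R W = angmom J R W - angmom J R0 W0"

definition grad_R :: "mat3 \<Rightarrow> vec3 \<Rightarrow> mat3" where
  "grad_R R W = k0 *\<^sub>R (R ** orth_defect R) + k2 *\<^sub>R outer (momentum_err R W) (J *v W)"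

definition grad_W :: "mat3 \<Rightarrow> vec3 \<Rightarrow> vec3" where
  "grad_W R W = (k1 * energy_err W) *\<^sub>R (J *v W) + k2 *\<^sub>R (J *v (transpose R *v momentum_err R W))"

definition dissipation :: "mat3 \<Rightarrow> vec3 \<Rightarrow> real" where
  "dissipation R W = (norm (grad_R R W))\<^sup>2 + (norm (grad_W R W))\<^sup>2"

lemma J_symmetric: "transpose J = J"
  using J_spd by (simp add: sym_pos_def_mat_def)

lemma J_pos_def: "v \<noteq> 0 \<Longrightarrow> 0 < inner v (J *v v)"
  using J_spd by (simp add: sym_pos_def_mat_def)

lemma J_invertible: "invertible J"
  unfolding invertible_iff_ker using J_pos_def by (metis inner_zero_right order_less_irrefl)

lemma lyapV_eq: "V R W =
   k0 / 4 * (norm (orth_defect R))\<^sup>2 + k1 / 2 * (energy_err W)\<^sup>2 + k2 / 2 * (norm (momentum_err R W))\<^sup>2"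
  by (simp add: lyapV_def frob_def norm_eq_sqrt_inner inner_self_eq_trace orth_defect_def
      energy_err_def momentum_err_def)

lemma lyapV_nonneg: "0 \<le> V R W"
  unfolding lyapV_eq using k0_pos k1_pos k2_pos by simp

lemma lyapV_eq_0_iff: "V R W = 0 \<longleftrightarrow> orth_defect R = 0 \<and> energy_err W = 0 \<and> momentum_err R W = 0"
  unfolding lyapV_eq using k0_pos k1_pos k2_pos by (simp add: add_nonneg_eq_0_iff)

lemma lyapV_sublevel_bounds:
  assumes "V R W \<le> c" "c \<le> k0 / 16" "c \<le> k1 * d\<^sup>2 / 2" "d \<ge> 0"
  shows "norm (orth_defect R) \<le> 1/2" "\<bar>energy_err W\<bar> \<le> d"
proof -
  have "0 \<le> k2 / 2 * (norm (momentum_err R W))\<^sup>2" "0 \<le> k0 / 4 * (norm (orth_defect R))\<^sup>2"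
    "0 \<le> k1 / 2 * (energy_err W)\<^sup>2"
    using k0_pos k1_pos k2_pos by auto
  then have "k0 / 4 * (norm (orth_defect R))\<^sup>2 \<le> k0 / 4 * (1/2)\<^sup>2"
    "k1 / 2 * (energy_err W)\<^sup>2 \<le> k1 / 2 * d\<^sup>2"
    using assms lyapV_eq[of R W] by (simp_all add: power2_eq_square)
  then have "(norm (orth_defect R))\<^sup>2 \<le> (1/2)\<^sup>2" "(energy_err W)\<^sup>2 \<le> d\<^sup>2"
    using k0_pos k1_pos by simp_all
  then show "norm (orth_defect R) \<le> 1/2" "\<bar>energy_err W\<bar> \<le> d"
    using \<open>d \<ge> 0\<close> by (auto intro: power2_le_imp_le simp: abs_le_square_iff)
qed

lemma lyapV_zero_set_eq_target_set:
  "{p \<in> dom_U. V (fst p) (snd p) = 0} = target_set J R0 W0"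
  using det_orthogonal_matrix
  by (force simp: lyapV_eq_0_iff dom_U_def target_set_def orth_defect_eq_0_iff energy_err_def
      momentum_err_def rotation_matrix_def)

lemma has_derivative_lyapV:
  fixes R :: "real \<Rightarrow> mat3" and W :: "real \<Rightarrow> vec3"
  assumes dR: "(R has_vector_derivative R') (at t within S)"
    and dW: "(W has_vector_derivative W') (at t within S)"
  shows "((\<lambda>t. V (R t) (W t)) has_real_derivative
     inner (grad_R (R t) (W t)) R' + inner (grad_W (R t) (W t)) W') (at t within S)"
proof -
  define X where "X = orth_defect (R t)"
  define X' where "X' = transpose (R t) ** R' + transpose R' ** R t"
  define p where "p = momentum_err (R t) (W t)"
  define p' where "p' = R t *v (J *v W') + R' *v (J *v W t)"
  define e' where "e' = inner (J *v W t) W'"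
  have dJW: "((\<lambda>t. J *v W t) has_vector_derivative J *v W') (at t within S)"
    using bounded_bilinear.has_vector_derivative[OF bounded_bilinear_matrix_vector_mult
        has_vector_derivative_const dW, of J] by simp
  have dX: "((\<lambda>t. orth_defect (R t)) has_vector_derivative X') (at t within S)"
    using bounded_bilinear.has_vector_derivative[OF bounded_bilinear_matrix_matrix_mult
        bounded_linear.has_vector_derivative[OF bounded_linear_transpose dR] dR]
    unfolding orth_defect_def X'_def by (subst has_vector_derivative_diff_const) simp
  have dp: "((\<lambda>t. momentum_err (R t) (W t)) has_vector_derivative p') (at t within S)"
    using bounded_bilinear.has_vector_derivative[OF bounded_bilinear_matrix_vector_mult dR dJW]
    unfolding momentum_err_def angmom_def p'_def by (subst has_vector_derivative_diff_const) simp
  have de: "((\<lambda>t. energy_err (W t)) has_real_derivative e') (at t within S)"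
  proof -
    have "inner (W t) (J *v W') = inner (J *v W t) W'"
      by (rule inner_symmetric_matrix[OF J_symmetric])
    then have "((\<lambda>t. inner (W t) (J *v W t)) has_real_derivative 2 * e') (at t within S)"
      using bounded_bilinear.has_vector_derivative[OF bounded_bilinear_inner dW dJW]
      by (simp add: e'_def inner_commute has_real_derivative_iff_has_vector_derivative)
    from DERIV_diff[OF DERIV_cmult[OF this, of "1/2"] DERIV_const[of "energy J W0"]] show ?thesis
      unfolding energy_err_def energy_def by simp
  qed
  have "((\<lambda>t. V (R t) (W t)) has_real_derivative
      k0/4 * (2 * inner X X') + k1/2 * (2 * energy_err (W t) * e') + k2/2 * (2 * inner p p'))
      (at t within S)"
    unfolding lyapV_eq X_def p_def
    using DERIV_power[OF de, of 2]
    by (intro DERIV_add DERIV_cmult has_real_derivative_norm_power2[OF dX]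
        has_real_derivative_norm_power2[OF dp]) (simp_all add: mult_ac)
  then show ?thesis
    unfolding X'_def p'_def X_def inner_orth_defect_derivative inner_angmom_derivative[OF J_symmetric]
    by (simp add: grad_R_def grad_W_def inner_add_left p_def e'_def algebra_simps inner_commute)
qed

text \<open>The free rigid body preserves \<open>R\<^sup>T R\<close>, the energy and the spatial angular momentum, so its
  vector field is orthogonal to the gradient of \<open>V\<close>.\<close>

lemma free_field_orthogonal_grad:
  "inner (grad_R R W) (R ** hat W) + inner (grad_W R W) (matrix_inv J *v cross3 (J *v W) W) = 0"
proof -
  define X where "X = orth_defect R"
  define p where "p = momentum_err R W"
  define u where "u = J *v W"
  have "inner (R ** X) (R ** hat W) = inner ((transpose R ** R) ** X) (hat W)"
    by (simp add: inner_matrix_mult_left matrix_mul_assoc)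
  also have "\<dots> = 0"
  proof (rule inner_hat_symmetric)
    have "transpose R ** R = X + mat 1" by (simp add: X_def orth_defect_def)
    then show "transpose ((transpose R ** R) ** X) = (transpose R ** R) ** X"
      by (simp add: matrix_transpose_mul X_def orth_defect_symmetric matrix_add_ldistrib
          matrix_add_rdistrib transpose_add)
  qed
  finally have a1: "inner (R ** X) (R ** hat W) = 0" .
  have a2: "inner (outer p u) (R ** hat W) = inner p (R *v cross3 W u)"
    by (simp add: inner_outer hat_mult_vector matrix_vector_mul_assoc[symmetric])
  have a3: "inner u (matrix_inv J *v cross3 u W) = 0"
    unfolding u_def using inner_matrix_inv_symmetric[OF J_symmetric J_invertible, of W]
    by (simp add: dot_cross_self)
  have a4: "inner (J *v (transpose R *v p)) (matrix_inv J *v cross3 u W) = inner p (R *v cross3 u W)"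
    using inner_matrix_inv_symmetric[OF J_symmetric J_invertible] inner_matrix_vector_mult[of p R]
    by (simp add: inner_commute del: transpose_matrix_vector)
  show ?thesis
    using a1 a2 a3 a4 cross_skew[of u W]
    by (simp add: grad_R_def grad_W_def inner_add_left X_def p_def u_def matrix_vector_mult_uminus
        del: transpose_matrix_vector)
qed

lemma ctrl_R_eq: "ctrl_R J k0 k1 k2 R0 W0 R W = R ** hat W - grad_R R W"
  unfolding ctrl_R_def grad_R_def orth_defect_def momentum_err_def
  using J_symmetric by (metis (no_types, lifting) diff_diff_eq vector_transpose_matrix)

lemma ctrl_W_eq: "ctrl_W J k0 k1 k2 R0 W0 R W = matrix_inv J *v cross3 (J *v W) W - grad_W R W"
  unfolding ctrl_W_def grad_W_def energy_err_def momentum_err_def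
  by (simp add: algebra_simps del: transpose_matrix_vector)

lemma ctrl_solution_lyapV_deriv:
  assumes "ctrl_solution J k0 k1 k2 R0 W0 Rt Wt" "t \<ge> 0"
  shows "((\<lambda>t. V (Rt t) (Wt t)) has_real_derivative - dissipation (Rt t) (Wt t)) (at t within {0..})"
proof -
  have "(Rt has_vector_derivative Rt t ** hat (Wt t) - grad_R (Rt t) (Wt t)) (at t within {0..})"
    "(Wt has_vector_derivative matrix_inv J *v cross3 (J *v Wt t) (Wt t) - grad_W (Rt t) (Wt t))
       (at t within {0..})"
    using assms unfolding ctrl_solution_def ctrl_R_eq ctrl_W_eq by auto
  moreover have "inner (grad_R (Rt t) (Wt t)) (Rt t ** hat (Wt t) - grad_R (Rt t) (Wt t))
      + inner (grad_W (Rt t) (Wt t)) (matrix_inv J *v cross3 (J *v Wt t) (Wt t) - grad_W (Rt t) (Wt t))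
      = - dissipation (Rt t) (Wt t)"
    using free_field_orthogonal_grad[of "Rt t" "Wt t"]
    by (simp add: dissipation_def inner_diff_right power2_norm_eq_inner)
  ultimately show ?thesis using DERIV_cong[OF has_derivative_lyapV] by blast
qed

lemma free_solution_lyapV_deriv:
  assumes "free_solution J Rt Wt" "t \<ge> 0"
  shows "((\<lambda>t. V (Rt t) (Wt t)) has_real_derivative 0) (at t within {0..})"
proof -
  have "(Rt has_vector_derivative Rt t ** hat (Wt t)) (at t within {0..})"
    "(Wt has_vector_derivative matrix_inv J *v cross3 (J *v Wt t) (Wt t)) (at t within {0..})"
    using assms unfolding free_solution_def by auto
  from has_derivative_lyapV[OF this] show ?thesis
    using free_field_orthogonal_grad[of "Rt t" "Wt t"] by simp
qed

lemma dissipation_eq_0_iff: "dissipation R W = 0 \<longleftrightarrow> grad_R R W = 0 \<and> grad_W R W = 0"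
  by (simp add: dissipation_def add_nonneg_eq_0_iff)

lemma critical_point_equations:
  assumes "grad_R R W = 0" "grad_W R W = 0"
  shows "transpose R *v momentum_err R W = (- (k1 * energy_err W / k2)) *\<^sub>R W"
    and "k0 *\<^sub>R ((transpose R ** R) ** orth_defect R) = (k1 * energy_err W) *\<^sub>R outer W (J *v W)"
proof -
  define p where "p = momentum_err R W"
  define q where "q = transpose R *v p"
  define e where "e = energy_err W"
  have "J *v ((k1 * e) *\<^sub>R W + k2 *\<^sub>R q) = 0"
    using assms(2) unfolding grad_W_def p_def q_def e_def
    by (simp add: matrix_vector_right_distrib matrix_vector_mult_scaleR del: transpose_matrix_vector)
  then have "(k1 * e) *\<^sub>R W + k2 *\<^sub>R q = 0"
    using J_invertible invertible_iff_ker by blast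
  then have "k2 *\<^sub>R q = - ((k1 * e) *\<^sub>R W)"
    by (simp add: eq_neg_iff_add_eq_0 add.commute)
  have "q = (1/k2) *\<^sub>R (k2 *\<^sub>R q)" using k2_pos by simp
  also have "\<dots> = (- (k1 * e / k2)) *\<^sub>R W" using \<open>k2 *\<^sub>R q = _\<close> by simp
  finally have "q = (- (k1 * e / k2)) *\<^sub>R W" .
  then show Rp: "transpose R *v momentum_err R W = (- (k1 * energy_err W / k2)) *\<^sub>R W"
    by (simp only: p_def q_def e_def)
  have "transpose R ** grad_R R W = 0" using assms(1) by simp
  then have "k0 *\<^sub>R ((transpose R ** R) ** orth_defect R) + k2 *\<^sub>R outer (transpose R *v p) (J *v W) = 0"
    unfolding grad_R_def p_def
    by (simp add: matrix_add_ldistrib matrix_mult_scaleR_right matrix_mult_outer matrix_mul_assoc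
        outer_scaleR_left matrix_vector_mult_scaleR del: transpose_matrix_vector)
  then show "k0 *\<^sub>R ((transpose R ** R) ** orth_defect R) = (k1 * energy_err W) *\<^sub>R outer W (J *v W)"
    using k2_pos unfolding Rp[folded p_def] outer_scaleR_left by (simp add: e_def eq_neg_iff_add_eq_0)
qed

lemma critical_point_energy_err_0:
  assumes X: "norm (orth_defect R) \<le> 1/2"
    and grad: "grad_R R W = 0" "grad_W R W = 0" and e: "energy_err W = 0"
  shows "V R W = 0"
proof -
  have X1: "norm (orth_defect R) < 1" using X by simp
  note eqs = critical_point_equations[OF grad]
  have "(transpose R ** R) ** orth_defect R = 0" using eqs(2) e k0_pos by simp
  then have "orth_defect R *v v = 0" for v
    using small_orth_defect_gram_ker[OF X1, of "orth_defect R *v v"]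
    by (simp add: matrix_vector_mul_assoc del: transpose_matrix_vector)
  then have "orth_defect R = 0" by (metis matrix_eq matrix_vector_mult_0)
  moreover have "transpose R *v momentum_err R W = 0"
    using eqs(1) e by (simp del: transpose_matrix_vector)
  then have "momentum_err R W = 0"
    using transpose_invertible[OF small_orth_defect_invertible[OF X1]] invertible_iff_ker by blast
  ultimately show ?thesis using e lyapV_eq_0_iff by blast
qed

lemma critical_point_rank_one:
  assumes grad: "grad_R R W = 0" "grad_W R W = 0" and e: "energy_err W \<noteq> 0"
  shows "outer W (J *v W) = outer (J *v W) W"
    and "orth_defect R ** outer W (J *v W) = outer W (J *v W) ** orth_defect R"
proof -
  define X where "X = orth_defect R"
  define M where "M = transpose R ** R"
  have MX: "M = X + mat 1" by (simp add: M_def X_def orth_defect_def)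
  have mx: "k0 *\<^sub>R (M ** X) = (k1 * energy_err W) *\<^sub>R outer W (J *v W)"
    using critical_point_equations(2)[OF grad] by (simp add: M_def X_def)
  have ke: "k1 * energy_err W \<noteq> 0" using e k1_pos by simp
  \<comment> \<open>\<open>M X = (X + I) X\<close> is symmetric and commutes with \<open>X\<close>.\<close>
  have "transpose (M ** X) = M ** X"
    by (simp add: MX matrix_transpose_mul X_def orth_defect_symmetric matrix_add_ldistrib
        matrix_add_rdistrib transpose_add)
  then have "(k1 * energy_err W) *\<^sub>R outer (J *v W) W = k0 *\<^sub>R (M ** X)"
    using arg_cong[OF mx, of transpose] by (simp add: transpose_scalar transpose_outer)
  then have "(k1 * energy_err W) *\<^sub>R outer W (J *v W) = (k1 * energy_err W) *\<^sub>R outer (J *v W) W"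
    using mx by metis
  then show "outer W (J *v W) = outer (J *v W) W" using ke by simp
  have "X ** (M ** X) = (M ** X) ** X"
    by (simp add: MX matrix_add_ldistrib matrix_add_rdistrib matrix_mul_assoc)
  then have "X ** (k0 *\<^sub>R (M ** X)) = (k0 *\<^sub>R (M ** X)) ** X"
    by (simp add: matrix_mult_scaleR_left matrix_mult_scaleR_right)
  then have "(k1 * energy_err W) *\<^sub>R (X ** outer W (J *v W))
      = (k1 * energy_err W) *\<^sub>R (outer W (J *v W) ** X)"
    unfolding mx by (simp add: matrix_mult_scaleR_left matrix_mult_scaleR_right)
  then show "orth_defect R ** outer W (J *v W) = outer W (J *v W) ** orth_defect R"
    using ke by (simp add: X_def)
qed

lemma critical_point_eigenvector:
  assumes X: "norm (orth_defect R) \<le> 1/2" and E: "energy J W > 0"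
    and grad: "grad_R R W = 0" "grad_W R W = 0" and e: "energy_err W \<noteq> 0"
  obtains l x where "l > 0" "J *v W = l *\<^sub>R W" "(transpose R ** R) *v W = (1 + x) *\<^sub>R W"
    "\<bar>x\<bar> \<le> 1/2" "x * (1 + x) = 2 * (k1/k0) * energy_err W * energy J W"
proof -
  define X where "X = orth_defect R"
  define M where "M = transpose R ** R"
  define u where "u = J *v W"
  have uW: "inner u W = 2 * energy J W" unfolding u_def energy_def by (simp add: inner_commute)
  have W: "W \<noteq> 0" using E by (auto simp: energy_def)
  note rank_one = critical_point_rank_one[OF grad e, folded u_def X_def]
  have ul: "u = (inner u W / inner W W) *\<^sub>R W"
    using symmetric_outer_eigenvector[OF rank_one(1) W] .
  have l: "inner u W / inner W W > 0" using uW E W by simp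
  define x where "x = inner u (X *v W) / inner u W"
  have XW: "X *v W = x *\<^sub>R W"
    using commuting_outer_eigenvector[OF rank_one(2)] uW E by (simp add: x_def)
  have MW: "M *v W = (1 + x) *\<^sub>R W"
    using XW by (simp add: M_def X_def orth_defect_def matrix_vector_mult_diff_rdistrib algebra_simps
        del: transpose_matrix_vector)
  have "\<bar>x\<bar> * norm W = norm (X *v W)" by (simp add: XW)
  also have "\<dots> \<le> norm X * norm W" by (rule norm_matrix_vector_le)
  also have "\<dots> \<le> 1/2 * norm W" using X by (intro mult_right_mono) (auto simp: X_def)
  finally have x: "\<bar>x\<bar> \<le> 1/2" using W by simp
  have "k0 *\<^sub>R ((M ** X) *v W) = (k1 * energy_err W) *\<^sub>R (outer W u *v W)"
    using arg_cong[OF critical_point_equations(2)[OF grad], of "\<lambda>A. A *v W"]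
    by (simp add: scaleR_matrix_vector_mult M_def X_def u_def)
  then have "(k0 * (x * (1 + x))) *\<^sub>R W = (k1 * energy_err W * (2 * energy J W)) *\<^sub>R W"
    by (simp add: matrix_vector_mul_assoc[symmetric] XW matrix_vector_mult_scaleR MW
        outer_mult_vector uW algebra_simps)
  then have "k0 * (x * (1 + x)) = k1 * energy_err W * (2 * energy J W)"
    using W by (metis scaleR_cancel_right)
  then have "x * (1 + x) = 2 * (k1/k0) * energy_err W * energy J W"
    using k0_pos by (simp add: field_simps)
  with that[OF l _ MW[unfolded M_def] x] ul show ?thesis by (simp add: u_def)
qed

lemma critical_point_momentum:
  assumes X: "norm (orth_defect R) \<le> 1/2" and E: "energy J W > 0"
    and grad: "grad_R R W = 0" "grad_W R W = 0" and e: "energy_err W \<noteq> 0"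
  obtains l x where "\<exists>v. v \<noteq> 0 \<and> J *v v = l *\<^sub>R v" "\<bar>x\<bar> \<le> 1/2"
    "x * (1 + x) = 2 * (k1/k0) * energy_err W * (energy J W0 + energy_err W)"
    "(norm (angmom J R0 W0))\<^sup>2
       = critical_momentum_sq l (k1/k2) (energy_err W) (energy J W0 + energy_err W) x"
proof -
  obtain l x where l: "l > 0" "J *v W = l *\<^sub>R W" and MW: "(transpose R ** R) *v W = (1 + x) *\<^sub>R W"
    and x: "\<bar>x\<bar> \<le> 1/2" "x * (1 + x) = 2 * (k1/k0) * energy_err W * energy J W"
    using critical_point_eigenvector[OF X E grad e] by blast
  have EE: "energy J W = energy J W0 + energy_err W" by (simp add: energy_err_def)
  have Rp: "transpose R *v momentum_err R W = (- (k1/k2 * energy_err W)) *\<^sub>R W"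
    using critical_point_equations(1)[OF grad] by simp
  have "invertible R" using X by (intro small_orth_defect_invertible) simp
  moreover have "angmom J R0 W0 = angmom J R W - momentum_err R W" by (simp add: momentum_err_def)
  ultimately have "(norm (angmom J R0 W0))\<^sup>2 = critical_momentum_sq l (k1/k2) (energy_err W) (energy J W) x"
    using norm_momentum_at_critical_point[OF l(2,1) MW _ Rp] x(1) by simp
  moreover have "W \<noteq> 0" using E by (auto simp: energy_def)
  ultimately show ?thesis
    using that[of l x] l(2) x by (auto simp: EE)
qed

lemma J_eigenvalue_pos:
  assumes "J *v v = l *\<^sub>R v" "v \<noteq> 0"
  shows "l > 0"
proof -
  have "0 < l * inner v v" using J_pos_def[OF assms(2)] assms(1) by simp
  moreover have "inner v v > 0" using assms(2) by simp
  ultimately show ?thesis by (simp add: zero_less_mult_iff)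
qed

lemma critical_energy_err_isolated:
  assumes "W0 \<noteq> 0"
  shows "\<exists>\<delta>>0. \<forall>l\<in>{l. \<exists>v. v \<noteq> 0 \<and> J *v v = l *\<^sub>R v}. \<forall>e. 0 < \<bar>e\<bar> \<and> \<bar>e\<bar> \<le> \<delta> \<longrightarrow>
      (\<forall>x. \<bar>x\<bar> \<le> 1/2 \<and> x * (1 + x) = 2 * (k1/k0) * e * (energy J W0 + e) \<longrightarrow>
        critical_momentum_sq l (k1/k2) e (energy J W0 + e) x \<noteq> (norm (angmom J R0 W0))\<^sup>2)"
proof (rule finite_uniform_radius)
  show "finite {l. \<exists>v::vec3. v \<noteq> 0 \<and> J *v v = l *\<^sub>R v}"
    by (rule symmetric_eigenvalues_finite[OF J_symmetric])
  have E0: "energy J W0 > 0" using J_pos_def[OF assms] by (simp add: energy_def)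
  fix l assume "l \<in> {l. \<exists>v. v \<noteq> 0 \<and> J *v v = l *\<^sub>R v}"
  then have "l > 0" using J_eigenvalue_pos by blast
  then show "\<exists>\<delta>>0. \<forall>e. 0 < \<bar>e\<bar> \<and> \<bar>e\<bar> \<le> \<delta> \<longrightarrow>
      (\<forall>x. \<bar>x\<bar> \<le> 1/2 \<and> x * (1 + x) = 2 * (k1/k0) * e * (energy J W0 + e) \<longrightarrow>
        critical_momentum_sq l (k1/k2) e (energy J W0 + e) x \<noteq> (norm (angmom J R0 W0))\<^sup>2)"
    using critical_momentum_sq_isolated[OF _ E0, where k = "k1/k2" and a = "k1/k0"]
      k0_pos k1_pos k2_pos by simp
qed

text \<open>The bound \<open>c \<le> k0/16\<close> keeps \<open>\<parallel>R\<^sup>T R - I\<parallel> \<le> 1/2\<close> on the sublevel set, so \<open>R\<close> is invertible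
  there; together with \<open>c \<le> k1/2\<close>, which bounds the energy, it makes the sublevel set compact.\<close>

definition admissible_level :: "real \<Rightarrow> bool" where
  "admissible_level c \<longleftrightarrow> 0 < c \<and> c \<le> k0 / 16 \<and> c \<le> k1 / 2
     \<and> (\<forall>R W. V R W \<le> c \<longrightarrow> 0 < V R W \<longrightarrow> 0 < dissipation R W)"

lemma exists_admissible_level:
  assumes "W0 \<noteq> 0"
  shows "\<exists>c. admissible_level c"
proof -
  define E0 where "E0 = energy J W0"
  have E0: "E0 > 0" using J_pos_def[OF assms] by (simp add: E0_def energy_def)
  define L where "L = {l. \<exists>v::vec3. v \<noteq> 0 \<and> J *v v = l *\<^sub>R v}"
  obtain \<delta> where \<delta>: "\<delta> > 0" and isolated: "\<forall>l\<in>L. \<forall>e. 0 < \<bar>e\<bar> \<and> \<bar>e\<bar> \<le> \<delta> \<longrightarrow>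
      (\<forall>x. \<bar>x\<bar> \<le> 1/2 \<and> x * (1 + x) = 2 * (k1/k0) * e * (E0 + e)
        \<longrightarrow> critical_momentum_sq l (k1/k2) e (E0 + e) x \<noteq> (norm (angmom J R0 W0))\<^sup>2)"
    using critical_energy_err_isolated[OF assms] unfolding L_def E0_def by blast
  define d where "d = min 1 (min (E0/2) \<delta>)"
  define c where "c = min (k0/16) (k1 * d\<^sup>2 / 2)"
  have d: "0 < d" "d \<le> 1" "d \<le> E0/2" "d \<le> \<delta>" using E0 \<delta> by (auto simp: d_def)
  have "admissible_level c"
    unfolding admissible_level_def
  proof (intro conjI allI impI)
    show "0 < c" "c \<le> k0 / 16" using d k0_pos k1_pos by (auto simp: c_def)
    have "d\<^sup>2 \<le> 1" using d(1,2) by (simp add: power_le_one)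
    then have "k1 * d\<^sup>2 \<le> k1" using k1_pos by (simp add: mult_left_le)
    then show "c \<le> k1 / 2" by (simp add: c_def min_le_iff_disj)
    fix R W assume V: "V R W \<le> c" "0 < V R W"
    show "0 < dissipation R W"
    proof (rule ccontr)
      assume "\<not> 0 < dissipation R W"
      moreover have "0 \<le> dissipation R W" by (simp add: dissipation_def)
      ultimately have grad: "grad_R R W = 0" "grad_W R W = 0"
        using dissipation_eq_0_iff by auto
      have X: "norm (orth_defect R) \<le> 1/2" and e: "\<bar>energy_err W\<bar> \<le> d"
        using lyapV_sublevel_bounds[OF V(1) _ _ less_imp_le[OF d(1)]] by (auto simp: c_def)
      have e0: "energy_err W \<noteq> 0" using critical_point_energy_err_0[OF X grad] V(2) by auto
      have "energy J W = E0 + energy_err W" by (simp add: energy_err_def E0_def)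
      then have "energy J W > 0" using e d(3) E0 by linarith
      then obtain l x where "l \<in> L" "\<bar>x\<bar> \<le> 1/2"
        "x * (1 + x) = 2 * (k1/k0) * energy_err W * (E0 + energy_err W)"
        "(norm (angmom J R0 W0))\<^sup>2 = critical_momentum_sq l (k1/k2) (energy_err W) (E0 + energy_err W) x"
        using critical_point_momentum[OF X _ grad e0] unfolding L_def E0_def by blast
      moreover have "\<bar>energy_err W\<bar> \<le> \<delta>" using e d(4) by linarith
      ultimately show False using isolated e0 by auto
    qed
  qed
  then show ?thesis ..
qed

lemma continuous_on_lyapV: "continuous_on UNIV (\<lambda>p. V (fst p) (snd p))"
  unfolding lyapV_eq orth_defect_def energy_err_def momentum_err_def energy_def angmom_def
  by (intro continuous_at_imp_continuous_on ballI continuous_intros)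

lemma continuous_on_dissipation: "continuous_on UNIV (\<lambda>p. dissipation (fst p) (snd p))"
  unfolding dissipation_def grad_R_def grad_W_def orth_defect_def energy_err_def momentum_err_def
    energy_def angmom_def
  by (intro continuous_at_imp_continuous_on ballI continuous_intros)

lemma compact_lyapV_sublevel:
  assumes "c \<le> k0 / 16" "c \<le> k1 / 2"
  shows "compact {p. V (fst p) (snd p) \<le> c}"
proof -
  obtain m where m: "m > 0" "\<And>v. m * (norm v)\<^sup>2 \<le> inner v (J *v v)"
    using pos_def_quadratic_lower_bound J_pos_def by blast
  define K where "K = 2 * (energy J W0 + 1) / m"
  have bound: "norm R \<le> 3 \<and> norm W \<le> sqrt K" if "V R W \<le> c" for R W
  proof -
    have X: "norm (orth_defect R) \<le> 1/2" and e: "\<bar>energy_err W\<bar> \<le> 1"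
      using lyapV_sublevel_bounds[OF that assms(1), of 1] assms(2) by auto
    have "(norm R)\<^sup>2 \<le> 3\<^sup>2" using norm_le_orth_defect[of R] X by simp
    then have "norm R \<le> 3" by (rule power2_le_imp_le) simp
    have "m * (norm W)\<^sup>2 \<le> 2 * (energy J W0 + energy_err W)"
      using m(2)[of W] by (simp add: energy_def energy_err_def)
    then have "(norm W)\<^sup>2 \<le> K" using e m(1) by (simp add: K_def field_simps)
    then show ?thesis using \<open>norm R \<le> 3\<close> real_le_rsqrt by blast
  qed
  define B where "B = cball (0::mat3) 3 \<times> cball (0::vec3) (sqrt K)"
  have "{p. V (fst p) (snd p) \<le> c} = B \<inter> {p. V (fst p) (snd p) \<le> c}"
    using bound by (force simp: B_def mem_cball_0)
  moreover have "compact (B \<inter> {p. V (fst p) (snd p) \<le> c})"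
    unfolding B_def
    by (intro compact_Int_closed compact_Times compact_cball closed_Collect_le continuous_on_lyapV
        continuous_on_const)
  ultimately show ?thesis by simp
qed

lemma lyapV_zero_set_eq:
  assumes "0 \<le> c"
  shows "{p \<in> {p. V (fst p) (snd p) \<le> c}. 0 \<le> det (fst p) \<and> V (fst p) (snd p) = 0}
       = {p \<in> dom_U. V (fst p) (snd p) = 0}"
proof -
  have "0 < det R" if "V R W = 0" "0 \<le> det R" for R W
    using that det_orthogonal_matrix[of R] by (auto simp: lyapV_eq_0_iff orth_defect_eq_0_iff)
  then show ?thesis using assms by (auto simp: dom_U_def case_prod_unfold)
qed

lemma ctrl_solution_continuous:
  "ctrl_solution J k0 k1 k2 R0 W0 Rt Wt \<Longrightarrow> continuous_on {0..} Rt"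
  by (rule has_vector_derivative_imp_continuous_on) (auto simp: ctrl_solution_def)

lemma free_solution_continuous:
  "free_solution J Rt Wt \<Longrightarrow> continuous_on {0..} Rt"
  by (rule has_vector_derivative_imp_continuous_on) (auto simp: free_solution_def)

lemma ctrl_solution_lyapV_antimono:
  assumes "ctrl_solution J k0 k1 k2 R0 W0 Rt Wt" "0 \<le> a" "a \<le> b"
  shows "V (Rt b) (Wt b) \<le> V (Rt a) (Wt a)"
  using DERIV_within_nonpos_imp_nonincreasing[OF ctrl_solution_lyapV_deriv[OF assms(1)] _ assms(2,3)]
  by (simp add: dissipation_def)

lemma free_solution_lyapV_antimono:
  assumes "free_solution J Rt Wt" "0 \<le> a" "a \<le> b"
  shows "V (Rt b) (Wt b) \<le> V (Rt a) (Wt a)"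
  using DERIV_within_nonpos_imp_nonincreasing[OF free_solution_lyapV_deriv[OF assms(1)] _ assms(2,3)]
  by simp

lemma ctrl_solution_stays_in_sublevel:
  assumes c: "admissible_level c" and sol: "ctrl_solution J k0 k1 k2 R0 W0 Rt Wt"
    and start: "(Rt 0, Wt 0) \<in> {p \<in> dom_U. 0 \<le> V (fst p) (snd p) \<and> V (fst p) (snd p) \<le> c}"
    and "t \<ge> 0"
  shows "(Rt t, Wt t) \<in> {p \<in> dom_U. 0 \<le> V (fst p) (snd p) \<and> V (fst p) (snd p) \<le> c}"
proof -
  have V: "V (Rt s) (Wt s) \<le> c" if "s \<ge> 0" for s
    using ctrl_solution_lyapV_antimono[OF sol order_refl that] start by simp
  \<comment> \<open>\<open>R\<^sup>T R\<close> stays within distance \<open>1/2\<close> of \<open>I\<close>, so \<open>det R\<close> cannot change sign.\<close>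
  have "det (Rt s) \<noteq> 0" if "s \<ge> 0" for s
    using lyapV_sublevel_bounds[OF V[OF that], of 1] c small_orth_defect_invertible invertible_det_nz
    by (force simp: admissible_level_def)
  then have "det (Rt t) > 0"
    using det_pos_along_path[OF ctrl_solution_continuous[OF sol]] start \<open>t \<ge> 0\<close> by (simp add: dom_U_def)
  then show ?thesis using V \<open>t \<ge> 0\<close> lyapV_nonneg by (simp add: dom_U_def)
qed

lemma ctrl_solution_converges:
  assumes c: "admissible_level c" and sol: "ctrl_solution J k0 k1 k2 R0 W0 Rt Wt"
    and start: "(Rt 0, Wt 0) \<in> {p \<in> dom_U. 0 \<le> V (fst p) (snd p) \<and> V (fst p) (snd p) \<le> c}"
  shows "((\<lambda>t. infdist (Rt t, Wt t) {p \<in> dom_U. V (fst p) (snd p) = 0}) \<longlongrightarrow> 0) at_top"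
proof -
  define S where "S = {p \<in> {p. V (fst p) (snd p) \<le> c}. 0 \<le> det (fst p)}"
  have S: "compact S"
    using c unfolding S_def admissible_level_def
    by (intro compact_Collect_le compact_lyapV_sublevel continuous_intros) auto
  have contV: "continuous_on S (\<lambda>p. V (fst p) (snd p))"
    using continuous_on_lyapV continuous_on_subset by blast
  have traj: "(Rt t, Wt t) \<in> S" if "t \<ge> 0" for t
    using ctrl_solution_stays_in_sublevel[OF c sol start that] by (simp add: S_def dom_U_def)
  have "((\<lambda>t. V (Rt t) (Wt t)) \<longlongrightarrow> 0) at_top"
    using lyapunov_tendsto_zero[OF S contV _ traj, of "\<lambda>p. dissipation (fst p) (snd p)"]
      continuous_on_subset[OF continuous_on_dissipation] c ctrl_solution_lyapV_deriv[OF sol]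
      lyapV_nonneg
    by (force simp: admissible_level_def S_def dissipation_def)
  then have "((\<lambda>t. infdist (Rt t, Wt t) {p \<in> S. V (fst p) (snd p) = 0}) \<longlongrightarrow> 0) at_top"
    using tendsto_infdist_zero_set[OF S contV traj] by simp
  also have "{p \<in> S. V (fst p) (snd p) = 0}
      = {p \<in> {p. V (fst p) (snd p) \<le> c}. 0 \<le> det (fst p) \<and> V (fst p) (snd p) = 0}"
    by (auto simp: S_def)
  also have "\<dots> = {p \<in> dom_U. V (fst p) (snd p) = 0}"
    using lyapV_zero_set_eq c by (simp add: admissible_level_def)
  finally show ?thesis .
qed

lemma target_set_invariant:
  fixes Rt :: "real \<Rightarrow> mat3" and Wt :: "real \<Rightarrow> vec3"
  assumes cont: "continuous_on {0..} Rt"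
    and V: "\<And>t. t \<ge> 0 \<Longrightarrow> V (Rt t) (Wt t) \<le> V (Rt 0) (Wt 0)"
    and start: "(Rt 0, Wt 0) \<in> target_set J R0 W0" and "t \<ge> 0"
  shows "(Rt t, Wt t) \<in> target_set J R0 W0"
proof -
  have "(Rt 0, Wt 0) \<in> {p \<in> dom_U. V (fst p) (snd p) = 0}"
    using start lyapV_zero_set_eq_target_set by simp
  then have V0: "V (Rt s) (Wt s) = 0" if "s \<ge> 0" for s
    using V[OF that] lyapV_nonneg[of "Rt s" "Wt s"] by simp
  have det_nz: "det (Rt s) \<noteq> 0" if "s \<ge> 0" for s
  proof -
    have "orthogonal_matrix (Rt s)" using V0[OF that] by (simp add: lyapV_eq_0_iff orth_defect_eq_0_iff)
    then have "det (Rt s) = 1 \<or> det (Rt s) = -1" by (rule det_orthogonal_matrix)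
    then show ?thesis by auto
  qed
  have "det (Rt 0) > 0" using start by (simp add: target_set_def rotation_matrix_def)
  then have "det (Rt t) > 0" using det_pos_along_path[OF cont det_nz] \<open>t \<ge> 0\<close> by blast
  then have "(Rt t, Wt t) \<in> {p \<in> dom_U. V (fst p) (snd p) = 0}"
    using V0[OF \<open>t \<ge> 0\<close>] by (simp add: dom_U_def)
  then show ?thesis using lyapV_zero_set_eq_target_set by simp
qed

lemma ctrl_solution_target_invariant:
  assumes "ctrl_solution J k0 k1 k2 R0 W0 Rt Wt" "(Rt 0, Wt 0) \<in> target_set J R0 W0" "t \<ge> 0"
  shows "(Rt t, Wt t) \<in> target_set J R0 W0"
  by (rule target_set_invariant[where Wt = Wt, OF ctrl_solution_continuous[OF assms(1)] _ assms(2,3)])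
    (simp add: ctrl_solution_lyapV_antimono[OF assms(1)])

lemma free_solution_target_invariant:
  assumes "free_solution J Rt Wt" "(Rt 0, Wt 0) \<in> target_set J R0 W0" "t \<ge> 0"
  shows "(Rt t, Wt t) \<in> target_set J R0 W0"
  by (rule target_set_invariant[where Wt = Wt, OF free_solution_continuous[OF assms(1)] _ assms(2,3)])
    (simp add: free_solution_lyapV_antimono[OF assms(1)])

end

theorem theorem5:
  fixes J R0 :: "real^3^3" and W0 :: "real^3" and k0 k1 k2 :: real
  assumes "sym_pos_def_mat J"
    and "rotation_matrix R0"
    and "W0 \<noteq> 0"
    and "k0 > 0" and "k1 > 0" and "k2 > 0"
  shows "\<exists>c>0.
     (\<forall>Rt Wt. ctrl_solution J k0 k1 k2 R0 W0 Rt Wt \<longrightarrow>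
        (Rt 0, Wt 0) \<in> {p \<in> dom_U. 0 \<le> lyapV J k0 k1 k2 R0 W0 (fst p) (snd p)
                                    \<and> lyapV J k0 k1 k2 R0 W0 (fst p) (snd p) \<le> c} \<longrightarrow>
        (\<forall>t\<ge>0. (Rt t, Wt t) \<in> {p \<in> dom_U. 0 \<le> lyapV J k0 k1 k2 R0 W0 (fst p) (snd p)
                                    \<and> lyapV J k0 k1 k2 R0 W0 (fst p) (snd p) \<le> c})
        \<and> ((\<lambda>t. infdist (Rt t, Wt t) {p \<in> dom_U. lyapV J k0 k1 k2 R0 W0 (fst p) (snd p) = 0})
              \<longlongrightarrow> 0) at_top)
   \<and> {p \<in> dom_U. lyapV J k0 k1 k2 R0 W0 (fst p) (snd p) = 0} = target_set J R0 W0
   \<and> (\<forall>Rt Wt. ctrl_solution J k0 k1 k2 R0 W0 Rt Wt \<longrightarrow> (Rt 0, Wt 0) \<in> target_set J R0 W0 \<longrightarrow>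
        (\<forall>t\<ge>0. (Rt t, Wt t) \<in> target_set J R0 W0))
   \<and> (\<forall>Rt Wt. free_solution J Rt Wt \<longrightarrow> (Rt 0, Wt 0) \<in> target_set J R0 W0 \<longrightarrow>
        (\<forall>t\<ge>0. (Rt t, Wt t) \<in> target_set J R0 W0))"
proof -
  interpret controlled_rigid_body J R0 W0 k0 k1 k2
    using assms by unfold_locales auto
  obtain c where c: "admissible_level c" using exists_admissible_level[OF assms(3)] ..
  then have "0 < c" by (simp add: admissible_level_def)
  then show ?thesis
    using ctrl_solution_stays_in_sublevel[OF c] ctrl_solution_converges[OF c]
      lyapV_zero_set_eq_target_set ctrl_solution_target_invariant free_solution_target_invariant
    by blast
qed

end
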